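(* Let $T_1:[0,1]\to[0,1]$ be a piecewise smooth map and $\rho_1$ a noise kernel as in the context, and let $L_{T_1,\rho_1}=N_{\rho_1}L_{T_1}$ be the associated transfer operator. Suppose there is $i$ with $\|L_{T_1,\rho_1}^i|_V\|_{L^1\to L^1}<1$. Then there is a constant $C>0$ such that for every map $T_2:[0,1]\to[0,1]$ with $\|T_1-T_2\|_{L^\infty}<\infty$, $$\|f_1-f_2\|_{L^1}\le C\,\|T_1-T_2\|_{L^\infty}\cdot\|\rho_1\|_{BV},$$ where $f_1$ is the stationary measure of $L_{T_1,\rho_1}$ and $f_2$ is a stationary measure of $L_{T_2,\rho_1}=N_{\rho_1}L_{T_2}$.
   Context: $T_1$ is piecewise smooth: there is a finite partition of $[0,1]$ into intervals $P_i$ such that on each $P_i$, $T_1$ is monotonic and $C^2$ in the interior, and the limits of $T_1'$ at the endpoints of $P_i$ exist in $\mathbb R\cup\{\pm\infty\}$. The noise kernel $\rho_1$ is a function of bounded variation with support in $[-\xi/2,\xi/2]$ and integral $1$; $\|\rho_1\|_{BV}$ denotes its total variation. For a measurable map $T$, $L_T$ is the pushforward on signed measures, $(L_T\mu)(A)=\mu(T^{-1}A)$. With $\pi(x)=\min_{i\in\mathbb Z}|x-2i|$, $N_{\rho}f=\pi_*(\rho*\hat f)$, where $\hat f$ is $f$ extended by $0$ outside $[0,1]$ and $\pi_*$ is pushforward by $\pi$ (reflecting boundary convolution). $V=\{\nu\in L^1([0,1]):\int\nu=0\}$. A stationary measure is a probability measure (density) fixed by the operator. *)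

theory Defs
  imports "HOL-Analysis.Analysis" "HOL-Probability.Essential_Supremum"
begin

definition variation_set :: "(real \<Rightarrow> real) \<Rightarrow> real set" where
  "variation_set f = {(\<Sum>k<n. \<bar>f (x (Suc k)) - f (x k)\<bar>) | n x.
       (\<forall>k<n. x k < x (Suc k))}"

definition bounded_variation :: "(real \<Rightarrow> real) \<Rightarrow> bool" where
  "bounded_variation f \<longleftrightarrow> bdd_above (variation_set f)"

definition BV_norm :: "(real \<Rightarrow> real) \<Rightarrow> real" where
  "BV_norm f = Sup (variation_set f)"

definition noise_kernel :: "real \<Rightarrow> (real \<Rightarrow> real) \<Rightarrow> bool" where
  "noise_kernel \<xi> \<rho> \<longleftrightarrow> bounded_variation \<rho>
     \<and> (\<forall>x. \<bar>x\<bar> > \<xi> / 2 \<longrightarrow> \<rho> x = 0)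
     \<and> integrable lborel \<rho> \<and> integral\<^sup>L lborel \<rho> = 1"

definition piecewise_smooth :: "(real \<Rightarrow> real) \<Rightarrow> bool" where
  "piecewise_smooth T \<longleftrightarrow>
     (\<exists>\<P> :: real set set. finite \<P> \<and> disjoint \<P> \<and> \<Union>\<P> = {0..1} \<and>
        (\<forall>P\<in>\<P>. is_interval P \<and> P \<noteq> {} \<and>
           (mono_on P T \<or> monotone_on P (\<le>) (\<ge>) T) \<and>
           (\<exists>T' T''. (\<forall>x\<in>interior P. (T has_real_derivative T' x) (at x)
                                     \<and> (T' has_real_derivative T'' x) (at x))
                     \<and> continuous_on (interior P) T''
                     \<and> (\<exists>l::ereal. ((\<lambda>x. ereal (T' x)) \<longlongrightarrow> l) (at (Inf P) within interior P))
                     \<and> (\<exists>l::ereal. ((\<lambda>x. ereal (T' x)) \<longlongrightarrow> l) (at (Sup P) within interior P)))))"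

definition refl_pi :: "real \<Rightarrow> real" where
  "refl_pi x = Inf (range (\<lambda>i::int. \<bar>x - 2 * of_int i\<bar>))"

(* density of rho * (L_T (f dx)) : (rho * L_T f)(z) = int_0^1 rho(z - T x) f(x) dx *)
definition conv_push :: "(real \<Rightarrow> real) \<Rightarrow> (real \<Rightarrow> real) \<Rightarrow> (real \<Rightarrow> real) \<Rightarrow> real \<Rightarrow> real" where
  "conv_push T \<rho> f z = integral\<^sup>L (lebesgue_on {0..1}) (\<lambda>x. \<rho> (z - T x) * f x)"

(* density of the pushforward pi_* g : sum of g over the preimages of y under pi *)
definition pi_push :: "(real \<Rightarrow> real) \<Rightarrow> real \<Rightarrow> real" where
  "pi_push g y = infsum g {z. refl_pi z = y}"

(* transfer operator L_{T,rho} = N_rho L_T acting on densities on [0,1] *)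
definition transfer_op :: "(real \<Rightarrow> real) \<Rightarrow> (real \<Rightarrow> real) \<Rightarrow> (real \<Rightarrow> real) \<Rightarrow> real \<Rightarrow> real" where
  "transfer_op T \<rho> f = pi_push (conv_push T \<rho> f)"

definition L1_norm :: "(real \<Rightarrow> real) \<Rightarrow> real" where
  "L1_norm f = integral\<^sup>L (lebesgue_on {0..1}) (\<lambda>x. \<bar>f x\<bar>)"

definition Linf_dist :: "(real \<Rightarrow> real) \<Rightarrow> (real \<Rightarrow> real) \<Rightarrow> ereal" where
  "Linf_dist T1 T2 = esssup (lebesgue_on {0..1}) (\<lambda>x. ereal \<bar>T1 x - T2 x\<bar>)"

definition stationary_density :: "(real \<Rightarrow> real) \<Rightarrow> (real \<Rightarrow> real) \<Rightarrow> (real \<Rightarrow> real) \<Rightarrow> bool" where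
  "stationary_density T \<rho> f \<longleftrightarrow> integrable (lebesgue_on {0..1}) f
     \<and> (AE x in lebesgue_on {0..1}. f x \<ge> 0)
     \<and> integral\<^sup>L (lebesgue_on {0..1}) f = 1
     \<and> (AE y in lebesgue_on {0..1}. transfer_op T \<rho> f y = f y)"

definition contracting_on_V :: "((real \<Rightarrow> real) \<Rightarrow> (real \<Rightarrow> real)) \<Rightarrow> nat \<Rightarrow> bool" where
  "contracting_on_V L i \<longleftrightarrow> (\<exists>c<1. \<forall>\<nu>. integrable (lebesgue_on {0..1}) \<nu>
       \<and> integral\<^sup>L (lebesgue_on {0..1}) \<nu> = 0
       \<longrightarrow> L1_norm ((L ^^ i) \<nu>) \<le> c * L1_norm \<nu>)"

end

theory Submission
  imports Defs
begin

text \<open>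
  Write \<open>D = f\<^sub>1 - f\<^sub>2\<close> and \<open>L\<^sub>j = L\<^bsub>T\<^sub>j,\<rho>\<^esub>\<close>. Stationarity gives \<open>D = L\<^sub>1 D + e\<close> with
  \<open>e = (L\<^sub>1 - L\<^sub>2) f\<^sub>2\<close>, and iterating, \<open>D = L\<^sub>1\<^sup>i D + \<Sum>\<^sub>k\<^sub><\<^sub>i L\<^sub>1\<^sup>k e\<close>. Since \<open>\<integral>D = 0\<close>, the contraction
  hypothesis bounds the first term by \<open>c \<parallel>D\<parallel>\<close>, and \<open>\<parallel>L\<^sub>1\<parallel> \<le> \<parallel>\<rho>\<parallel>\<^sub>1\<close> bounds the sum, so
  \<open>\<parallel>D\<parallel> \<le> (\<Sum>\<^sub>k\<^sub><\<^sub>i \<parallel>\<rho>\<parallel>\<^sub>1\<^sup>k) / (1 - c) \<cdot> \<parallel>e\<parallel>\<close>. Finally \<open>\<parallel>e\<parallel> \<le> \<parallel>T\<^sub>1 - T\<^sub>2\<parallel>\<^sub>\<infinity> \<parallel>\<rho>\<parallel>\<^sub>B\<^sub>V\<close>: translating a BV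
  kernel by \<open>a\<close> changes it in \<open>L\<^sup>1\<close> by at most \<open>\<bar>a\<bar> \<parallel>\<rho>\<parallel>\<^sub>B\<^sub>V\<close>, and folding by the reflection \<open>\<pi>\<close>
  does not increase \<open>L\<^sup>1\<close> norms. Piecewise smoothness of \<open>T\<^sub>1\<close> is only needed for measurability.
\<close>

abbreviation lebesgue_01 :: "real measure" where
  "lebesgue_01 \<equiv> lebesgue_on {0..1}"

section \<open>Kernels of bounded variation\<close>

lemma variation_sum_le_BV_norm:
  assumes "bounded_variation f" "\<And>k. k < n \<Longrightarrow> x k < x (Suc k)"
  shows "(\<Sum>k<n. \<bar>f (x (Suc k)) - f (x k)\<bar>) \<le> BV_norm f"
proof -
  have "(\<Sum>k<n. \<bar>f (x (Suc k)) - f (x k)\<bar>) \<in> variation_set f"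
    unfolding variation_set_def using assms(2) by blast
  then show ?thesis using assms(1) unfolding bounded_variation_def BV_norm_def
    by (simp add: cSup_upper)
qed

lemma BV_norm_nonneg: "bounded_variation f \<Longrightarrow> 0 \<le> BV_norm f"
  using variation_sum_le_BV_norm[of f 0 "\<lambda>k. k"] by simp

lemma abs_le_BV_norm_if_bounded_support:
  assumes bv: "bounded_variation f" and supp: "\<And>x. \<bar>x\<bar> > R \<Longrightarrow> f x = 0"
  shows "\<bar>f x\<bar> \<le> BV_norm f"
proof -
  let ?y = "\<bar>x\<bar> + \<bar>R\<bar> + 1"
  have "(\<Sum>k<1. \<bar>f ((\<lambda>k. if k = 0 then x else ?y) (Suc k)) - f ((\<lambda>k. if k = 0 then x else ?y) k)\<bar>)
      \<le> BV_norm f"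
    by (rule variation_sum_le_BV_norm[OF bv]) auto
  then show ?thesis using supp[of ?y] by simp
qed

lemma lborel_integral_shift:
  fixes f :: "real \<Rightarrow> real"
  shows "(\<integral>t. f (t + c) \<partial>lborel) = (\<integral>w. f w \<partial>lborel)"
  using lborel_integral_real_affine[of 1 f c] by (simp add: add.commute)

lemma lborel_integrable_shift:
  fixes f :: "real \<Rightarrow> real"
  shows "integrable lborel f \<Longrightarrow> integrable lborel (\<lambda>t. f (t + c))"
  using lborel_integrable_real_affine[of f 1 c] by (simp add: add.commute)

lemma lborel_integral_Ico_split:
  fixes u :: "real \<Rightarrow> real"
  assumes ui: "integrable lborel u" and a: "a > 0"
  shows "(\<integral>w. indicator {c..<c + real n * a} w * u w \<partial>lborel)
      = (\<Sum>k<n. \<integral>t. indicator {0..<a} t * u (t + (c + real k * a)) \<partial>lborel)"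
proof (induction n)
  case 0 then show ?case by simp
next
  case (Suc n)
  have an: "0 \<le> a * real n" using a by simp
  have split: "indicator {c..<c + real (Suc n) * a} w * u w
     = indicator {c..<c + real n * a} w * u w + indicator {c + real n * a..<c + real n * a + a} w * u w"
    for w
    using a an by (auto simp: indicator_def algebra_simps) (use an in linarith)+
  have ind_int: "integrable lborel (\<lambda>w. indicator {p..<q} w * u w)" for p q :: real
    using integrable_mult_indicator[of "{p..<q}" lborel u] ui by simp
  have "(\<integral>w. indicator {c..<c + real (Suc n) * a} w * u w \<partial>lborel)
     = (\<integral>w. indicator {c..<c + real n * a} w * u w \<partial>lborel)
       + (\<integral>w. indicator {c + real n * a..<c + real n * a + a} w * u w \<partial>lborel)"
    unfolding split by (rule Bochner_Integration.integral_add) (rule ind_int)+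
  also have "(\<integral>w. indicator {c + real n * a..<c + real n * a + a} w * u w \<partial>lborel)
      = (\<integral>t. indicator {0..<a} t * u (t + (c + real n * a)) \<partial>lborel)"
    by (subst lborel_integral_shift[symmetric, where c="c + real n * a"])
       (rule Bochner_Integration.integral_cong, auto simp: indicator_def)
  finally show ?case using Suc by simp
qed

text \<open>Cut \<open>\<real>\<close> into intervals of length \<open>a\<close>: for each \<open>t \<in> [0, a)\<close> the increments of \<open>f\<close> along
  \<open>t + c + a\<int>\<close> form one partition sum, hence are bounded by \<open>BV_norm f\<close>.\<close>

lemma L1_shift_le_BV_norm_pos:
  fixes f :: "real \<Rightarrow> real"
  assumes bv: "bounded_variation f" and supp: "\<And>x. \<bar>x\<bar> > R \<Longrightarrow> f x = 0"
    and fi: "integrable lborel f" and a: "a > 0"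
  shows "(\<integral>z. \<bar>f (z + a) - f z\<bar> \<partial>lborel) \<le> a * BV_norm f"
proof -
  define u where "u w = \<bar>f (w + a) - f w\<bar>" for w
  have ui: "integrable lborel u" unfolding u_def
    by (intro integrable_abs Bochner_Integration.integrable_diff lborel_integrable_shift fi)
  have piece_int: "integrable lborel (\<lambda>t. indicator {0..<a} t * u (t + s))" for s
    using integrable_mult_indicator[of "{0..<a}" lborel, OF _ lborel_integrable_shift[OF ui]] by simp
  obtain N :: nat where N: "real N * a > \<bar>R\<bar> + a"
    using a reals_Archimedean3 by blast
  define c where "c = - (real N * a)"
  have "(\<integral>w. u w \<partial>lborel) = (\<integral>w. indicator {c..<c + real (2*N) * a} w * u w \<partial>lborel)"
  proof (rule Bochner_Integration.integral_cong)
    fix w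
    show "u w = indicator {c..<c + real (2 * N) * a} w * u w"
    proof (cases "w \<in> {c..<c + real (2 * N) * a}")
      case False
      then have "w < c \<or> w \<ge> c + real (2*N) * a" by auto
      then have "\<bar>w\<bar> > R \<and> \<bar>w + a\<bar> > R"
        using N a unfolding c_def by (auto simp: algebra_simps)
      then show ?thesis using False supp unfolding u_def by simp
    qed simp
  qed simp
  also have "\<dots> = (\<Sum>k<2*N. \<integral>t. indicator {0..<a} t * u (t + (c + real k * a)) \<partial>lborel)"
    by (rule lborel_integral_Ico_split[OF ui a])
  also have "\<dots> = (\<integral>t. (\<Sum>k<2*N. indicator {0..<a} t * u (t + (c + real k * a))) \<partial>lborel)"
    by (rule Bochner_Integration.integral_sum[symmetric]) (auto intro!: piece_int)
  also have "\<dots> \<le> (\<integral>t. indicator {0..<a} t * BV_norm f \<partial>lborel)"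
  proof (rule integral_mono)
    show "integrable lborel (\<lambda>t. \<Sum>k<2*N. indicator {0..<a} t * u (t + (c + real k * a)))"
      by (rule Bochner_Integration.integrable_sum) (rule piece_int)
    show "integrable lborel (\<lambda>t. indicator {0..<a} t * BV_norm f)"
      using a by (intro integrable_mult_left integrable_real_indicator) (auto simp: emeasure_lborel_Ico)
    fix t
    have "(\<Sum>k<2*N. u (t + (c + real k * a))) \<le> BV_norm f"
      unfolding u_def
      using variation_sum_le_BV_norm[OF bv, of "2*N" "\<lambda>k. t + (c + real k * a)"] a
      by (simp add: algebra_simps)
    then show "(\<Sum>k<2*N. indicator {0..<a} t * u (t + (c + real k * a))) \<le> indicator {0..<a} t * BV_norm f"
      by (simp add: sum_distrib_left[symmetric] indicator_def)
  qed
  also have "\<dots> = a * BV_norm f"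
    using a by simp
  finally show ?thesis unfolding u_def .
qed

lemma L1_shift_le_BV_norm:
  fixes f :: "real \<Rightarrow> real"
  assumes bv: "bounded_variation f" and supp: "\<And>x. \<bar>x\<bar> > R \<Longrightarrow> f x = 0"
    and fi: "integrable lborel f"
  shows "(\<integral>z. \<bar>f (z + a) - f z\<bar> \<partial>lborel) \<le> \<bar>a\<bar> * BV_norm f"
proof -
  consider "a > 0" | "a = 0" | "a < 0" by linarith
  then show ?thesis
  proof cases
    case 1 then show ?thesis using L1_shift_le_BV_norm_pos[OF bv supp fi] by simp
  next
    case 2 then show ?thesis by simp
  next
    case 3
    have "(\<integral>z. \<bar>f (z + a) - f z\<bar> \<partial>lborel) = (\<integral>w. \<bar>f (w + (-a) + a) - f (w + (-a))\<bar> \<partial>lborel)"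
      by (rule lborel_integral_shift[symmetric])
    also have "\<dots> = (\<integral>w. \<bar>f (w + (-a)) - f w\<bar> \<partial>lborel)"
      by (simp add: abs_minus_commute)
    also have "\<dots> \<le> (-a) * BV_norm f"
      using L1_shift_le_BV_norm_pos[OF bv supp fi, where a="-a"] 3 by simp
    finally show ?thesis using 3 by simp
  qed
qed

lemma L1_norm_add_le:
  assumes "integrable lebesgue_01 u" "integrable lebesgue_01 v"
  shows "L1_norm (\<lambda>x. u x + v x) \<le> L1_norm u + L1_norm v"
proof -
  have "L1_norm (\<lambda>x. u x + v x) \<le> (\<integral>x. \<bar>u x\<bar> + \<bar>v x\<bar> \<partial>lebesgue_01)"
    unfolding L1_norm_def using assms by (intro integral_mono) (auto simp: abs_triangle_ineq)
  then show ?thesis using assms unfolding L1_norm_def by simp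
qed

lemma L1_norm_sum_le:
  fixes u :: "nat \<Rightarrow> real \<Rightarrow> real"
  assumes "finite A" "\<And>k. k \<in> A \<Longrightarrow> integrable lebesgue_01 (u k)"
  shows "L1_norm (\<lambda>x. \<Sum>k\<in>A. u k x) \<le> (\<Sum>k\<in>A. L1_norm (u k))"
  using assms
proof (induction A rule: finite_induct)
  case empty then show ?case by (simp add: L1_norm_def)
next
  case (insert a A)
  have "L1_norm (\<lambda>x. \<Sum>k\<in>insert a A. u k x) = L1_norm (\<lambda>x. u a x + (\<Sum>k\<in>A. u k x))"
    using insert by simp
  also have "\<dots> \<le> L1_norm (u a) + L1_norm (\<lambda>x. \<Sum>k\<in>A. u k x)"
    using insert by (intro L1_norm_add_le) auto
  finally show ?case using insert by simp
qed

lemma integral_kernel_L1_bound: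
  fixes k :: "real \<Rightarrow> real \<Rightarrow> real" and g :: "real \<Rightarrow> real" and B :: real
  assumes km: "case_prod k \<in> borel_measurable (lebesgue_01 \<Otimes>\<^sub>M lborel)"
    and gi: "integrable lebesgue_01 g"
    and ki: "\<And>x. x \<in> {0..1} \<Longrightarrow> integrable lborel (k x)"
    and kb: "AE x in lebesgue_01. (\<integral>z. \<bar>k x z\<bar> \<partial>lborel) \<le> B"
  shows "integrable lborel (\<lambda>z. \<integral>x. k x z * g x \<partial>lebesgue_01)"
    and "(\<integral>z. \<bar>\<integral>x. k x z * g x \<partial>lebesgue_01\<bar> \<partial>lborel) \<le> B * L1_norm g"
proof -
  interpret M: finite_measure lebesgue_01 by (simp add: finite_measure_lebesgue_on)
  interpret P: pair_sigma_finite lebesgue_01 lborel ..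
  have [measurable]: "g \<in> borel_measurable lebesgue_01" using gi by auto
  note km[measurable]
  have fibre_bound: "AE x in lebesgue_01. (\<integral>z. \<bar>k x z * g x\<bar> \<partial>lborel) \<le> B * \<bar>g x\<bar>"
    using kb by eventually_elim (simp add: abs_mult mult_right_mono)
  have fibre_int: "integrable lebesgue_01 (\<lambda>x. \<integral>z. \<bar>k x z * g x\<bar> \<partial>lborel)"
    by (rule Bochner_Integration.integrable_bound[where f="\<lambda>x. B * g x"])
       (use gi fibre_bound in \<open>auto elim!: eventually_mono\<close>)
  have pint: "integrable (lebesgue_01 \<Otimes>\<^sub>M lborel) (\<lambda>(x,z). k x z * g x)"
    by (rule P.Fubini_integrable) (use fibre_int ki in \<open>auto simp: space_restrict_space intro!: AE_I2\<close>)
  have pint_abs: "integrable (lebesgue_01 \<Otimes>\<^sub>M lborel) (\<lambda>(x,z). \<bar>k x z * g x\<bar>)"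
    using integrable_abs[OF pint] by (simp add: case_prod_beta')
  show "integrable lborel (\<lambda>z. \<integral>x. k x z * g x \<partial>lebesgue_01)"
    using P.integrable_snd[of "\<lambda>x z. k x z * g x"] pint by simp
  have "(\<integral>z. \<bar>\<integral>x. k x z * g x \<partial>lebesgue_01\<bar> \<partial>lborel)
      \<le> (\<integral>z. (\<integral>x. \<bar>k x z * g x\<bar> \<partial>lebesgue_01) \<partial>lborel)"
    using P.integrable_snd[of "\<lambda>x z. k x z * g x"] pint
      P.integrable_snd[of "\<lambda>x z. \<bar>k x z * g x\<bar>"] pint_abs
    by (intro integral_mono integral_abs_bound) auto
  also have "\<dots> = (\<integral>x. (\<integral>z. \<bar>k x z * g x\<bar> \<partial>lborel) \<partial>lebesgue_01)"
    using P.Fubini_integral[of "\<lambda>x z. \<bar>k x z * g x\<bar>"] pint_abs by simp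
  also have "\<dots> \<le> (\<integral>x. B * \<bar>g x\<bar> \<partial>lebesgue_01)"
    using fibre_int gi fibre_bound by (intro integral_mono_AE) auto
  also have "\<dots> = B * L1_norm g" by (simp add: L1_norm_def)
  finally show "(\<integral>z. \<bar>\<integral>x. k x z * g x \<partial>lebesgue_01\<bar> \<partial>lborel) \<le> B * L1_norm g" .
qed

section \<open>The reflection \<open>\<pi>\<close> and its pushforward\<close>

lemma lebesgue_01_integral_eq_lborel:
  fixes g :: "real \<Rightarrow> real"
  assumes [measurable]: "g \<in> borel_measurable borel"
  shows "integral\<^sup>L lebesgue_01 g = (\<integral>y. indicator {0<..<1} y * g y \<partial>lborel)"
    and "integrable lebesgue_01 g \<longleftrightarrow> integrable lborel (\<lambda>y. indicator {0<..<1} y * g y)"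
proof -
  have ae: "AE y in lborel. indicator {0..1} y * g y = indicator {0<..<1} y * g y"
    using AE_lborel_singleton[of 0] AE_lborel_singleton[of 1]
    by eventually_elim (auto simp: indicator_def)
  have "integral\<^sup>L lebesgue_01 g = integral\<^sup>L lebesgue (\<lambda>y. indicator {0..1} y * g y)"
    by (simp add: integral_restrict_space)
  also have "\<dots> = (\<integral>y. indicator {0..1} y * g y \<partial>lborel)"
    by (rule integral_completion) measurable
  also have "\<dots> = (\<integral>y. indicator {0<..<1} y * g y \<partial>lborel)"
    by (rule integral_cong_AE) (use ae in auto)
  finally show "integral\<^sup>L lebesgue_01 g = (\<integral>y. indicator {0<..<1} y * g y \<partial>lborel)" .
  have "integrable lebesgue_01 g \<longleftrightarrow> integrable lebesgue (\<lambda>y. indicator {0..1} y * g y)"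
    by (simp add: integrable_restrict_space)
  also have "\<dots> \<longleftrightarrow> integrable lborel (\<lambda>y. indicator {0..1} y * g y)"
    by (rule integrable_completion) measurable
  also have "\<dots> \<longleftrightarrow> integrable lborel (\<lambda>y. indicator {0<..<1} y * g y)"
    by (rule integrable_cong_AE) (use ae in auto)
  finally show "integrable lebesgue_01 g \<longleftrightarrow> integrable lborel (\<lambda>y. indicator {0<..<1} y * g y)" .
qed

lemma borel_measurable_lebesgue_01:
  "g \<in> borel_measurable borel \<Longrightarrow> (g :: real \<Rightarrow> real) \<in> borel_measurable lebesgue_01"
  by (simp add: measurable_completion measurable_restrict_space1)

lemma borel_measurable_lebesgue_01_cong_interior:
  fixes S p :: "real \<Rightarrow> real"
  assumes [measurable]: "S \<in> borel_measurable borel" and eq: "\<And>y. 0 < y \<Longrightarrow> y < 1 \<Longrightarrow> p y = S y"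
  shows "p \<in> borel_measurable lebesgue_01"
proof -
  define c0 where "c0 = p 0 - S 0"
  define c1 where "c1 = p 1 - S 1"
  have "(\<lambda>y. S y + indicator {0} y * c0 + indicator {1} y * c1) \<in> borel_measurable lebesgue_01"
    by (rule borel_measurable_lebesgue_01) measurable
  moreover have "\<And>y. y \<in> space lebesgue_01 \<Longrightarrow> S y + indicator {0} y * c0 + indicator {1} y * c1 = p y"
    using eq by (auto simp: c0_def c1_def indicator_def)
  ultimately show ?thesis by (rule measurable_cong[THEN iffD1, rotated])
qed

lemma AE_lebesgue_01_interior: "AE y in lebesgue_01. 0 < y \<and> y < 1"
proof -
  have "AE y in lborel. y \<noteq> 0 \<and> y \<noteq> 1"
    using AE_lborel_singleton[of 0] AE_lborel_singleton[of 1] by eventually_elim auto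
  then have "AE y in lebesgue. y \<noteq> 0 \<and> y \<noteq> 1" by (rule AE_completion)
  then show ?thesis
    by (subst AE_restrict_space_iff) (auto elim!: eventually_mono)
qed

lemma refl_pi_eq:
  fixes i :: int and r :: real
  assumes "0 \<le> r" "r < 2"
  shows "refl_pi (2 * of_int i + r) = min r (2 - r)"
  unfolding refl_pi_def
proof (rule cInf_eq_minimum)
  show "min r (2 - r) \<in> range (\<lambda>j::int. \<bar>2 * of_int i + r - 2 * of_int j\<bar>)"
  proof (cases "r \<le> 2 - r")
    case True
    then have "min r (2 - r) = \<bar>2 * of_int i + r - 2 * of_int i\<bar>" using assms by simp
    then show ?thesis by blast
  next
    case False
    then have "min r (2 - r) = \<bar>2 * of_int i + r - 2 * of_int (i + 1)\<bar>" using assms by simp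
    then show ?thesis by blast
  qed
next
  fix x assume "x \<in> range (\<lambda>j::int. \<bar>2 * of_int i + r - 2 * of_int j\<bar>)"
  then obtain j :: int where x: "x = \<bar>2 * of_int i + r - 2 * of_int j\<bar>" by auto
  show "min r (2 - r) \<le> x"
  proof (cases "j \<le> i")
    case True
    then have "real_of_int j \<le> of_int i" by simp
    then show ?thesis using x assms by simp
  next
    case False
    then have "real_of_int j \<ge> of_int i + 1" by simp
    then show ?thesis using x assms by simp
  qed
qed

lemma refl_pi_plus: "0 \<le> y \<Longrightarrow> y \<le> 1 \<Longrightarrow> refl_pi (2 * of_int i + y) = y"
  using refl_pi_eq[of y i] by simp

lemma refl_pi_minus:
  assumes "0 \<le> y" "y \<le> 1"
  shows "refl_pi (2 * of_int i - y) = y"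
proof (cases "y = 0")
  case True then show ?thesis using refl_pi_plus[of 0 i] by simp
next
  case False
  then have "refl_pi (2 * of_int (i - 1) + (2 - y)) = min (2 - y) (2 - (2 - y))"
    using assms by (intro refl_pi_eq) auto
  moreover have "2 * real_of_int (i - 1) + (2 - y) = 2 * of_int i - y" by simp
  ultimately show ?thesis using assms by simp
qed

lemma refl_pi_preimage:
  assumes "refl_pi z = y"
  obtains i :: int where "z = 2 * of_int i + y \<or> z = 2 * of_int i - y"
proof -
  define m where "m = \<lfloor>z / 2\<rfloor>"
  define r where "r = z - 2 * of_int m"
  have r: "0 \<le> r" "r < 2" unfolding r_def m_def
    using floor_divide_lower[of 2 z] floor_divide_upper[of 2 z] by (auto simp: field_simps)
  have z: "z = 2 * of_int m + r" unfolding r_def by simp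
  have "y = min r (2 - r)" using refl_pi_eq[OF r, of m] assms z by simp
  then have "z = 2 * of_int m + y \<or> z = 2 * of_int (m + 1) - y" using z by (auto simp: min_def)
  then show ?thesis using that by blast
qed

lemma pi_push_eq_sum:
  fixes h :: "real \<Rightarrow> real"
  assumes supp: "\<And>z. \<bar>z\<bar> > R \<Longrightarrow> h z = 0" and N: "R + 1 \<le> 2 * real N"
    and y: "0 < y" "y < 1"
  shows "pi_push h y = (\<Sum>i\<in>{-int N..int N}. h (2 * of_int i + y) + h (2 * of_int i - y))"
proof -
  define I where "I = {-int N..int N}"
  define A where "A = (\<lambda>i. 2 * real_of_int i + y) ` I"
  define B where "B = (\<lambda>i. 2 * real_of_int i - y) ` I"
  have fin: "finite A" "finite B" unfolding A_def B_def I_def by simp_all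
  have "pi_push h y = infsum h (A \<union> B)"
    unfolding pi_push_def
  proof (rule infsum_cong_neutral)
    fix z assume z: "z \<in> {z. refl_pi z = y} - (A \<union> B)"
    then have "refl_pi z = y" by simp
    then obtain i :: int where zi: "z = 2 * of_int i + y \<or> z = 2 * of_int i - y"
      by (rule refl_pi_preimage)
    have "i \<notin> I" using z zi unfolding A_def B_def by auto
    then have "i \<le> - int N - 1 \<or> i \<ge> int N + 1" unfolding I_def by auto
    then have "real_of_int i \<le> real_of_int (- int N - 1) \<or> real_of_int i \<ge> real_of_int (int N + 1)"
      by (simp only: of_int_le_iff)
    then have "real_of_int i \<le> - real N - 1 \<or> real_of_int i \<ge> real N + 1" by simp
    then have "\<bar>z\<bar> > R" using zi N y by auto
    then show "h z = 0" by (rule supp)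
  qed (use y refl_pi_plus refl_pi_minus in \<open>auto simp: A_def B_def\<close>)
  also have "\<dots> = sum h A + sum h B"
  proof -
    have "A \<inter> B = {}"
    proof (rule ccontr)
      assume "A \<inter> B \<noteq> {}"
      then obtain i j :: int where "2 * real_of_int i + y = 2 * of_int j - y"
        unfolding A_def B_def by auto
      then have "y = of_int (j - i)" by simp
      then have "0 < j - i" "j - i < 1" using y by simp_all
      then show False by linarith
    qed
    then show ?thesis using fin by (simp add: sum.union_disjoint)
  qed
  also have "sum h A = (\<Sum>i\<in>I. h (2 * of_int i + y))"
    unfolding A_def by (rule sum.reindex_cong[where l="\<lambda>i. 2 * real_of_int i + y"]) (auto simp: inj_on_def)
  also have "sum h B = (\<Sum>i\<in>I. h (2 * of_int i - y))"
    unfolding B_def by (rule sum.reindex_cong[where l="\<lambda>i. 2 * real_of_int i - y"]) (auto simp: inj_on_def)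
  finally show ?thesis unfolding I_def by (simp add: sum.distrib)
qed

lemma obtain_fold_bound:
  fixes R :: real
  obtains N :: nat where "R + 1 \<le> 2 * real N"
  using real_arch_simple[of "(R + 1) / 2"] by (auto simp: field_simps)

lemma pi_push_linear:
  fixes h1 h2 :: "real \<Rightarrow> real" and a b :: real
  assumes s1: "\<And>z. \<bar>z\<bar> > R \<Longrightarrow> h1 z = 0" and s2: "\<And>z. \<bar>z\<bar> > R \<Longrightarrow> h2 z = 0"
  shows "AE y in lebesgue_01. pi_push (\<lambda>z. a * h1 z + b * h2 z) y = a * pi_push h1 y + b * pi_push h2 y"
proof -
  obtain N :: nat where N: "R + 1 \<le> 2 * real N" by (rule obtain_fold_bound)
  have s3: "\<And>z. \<bar>z\<bar> > R \<Longrightarrow> a * h1 z + b * h2 z = 0" using s1 s2 by simp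
  show ?thesis using AE_lebesgue_01_interior
  proof eventually_elim
    case (elim y)
    then show ?case
      using pi_push_eq_sum[OF s1 N, where y=y] pi_push_eq_sum[OF s2 N, where y=y] pi_push_eq_sum[OF s3 N, where y=y]
      by (simp add: sum_distrib_left sum.distrib[symmetric] algebra_simps)
  qed
qed

lemma lborel_integral_flip_shift:
  fixes h :: "real \<Rightarrow> real"
  shows "(\<integral>y. indicator {0<..<1} y * \<bar>h (c + y)\<bar> \<partial>lborel) = (\<integral>w. indicator {c<..<c+1} w * \<bar>h w\<bar> \<partial>lborel)"
    and "(\<integral>y. indicator {0<..<1} y * \<bar>h (c - y)\<bar> \<partial>lborel) = (\<integral>w. indicator {c-1<..<c} w * \<bar>h w\<bar> \<partial>lborel)"
proof -
  have "(\<integral>w. indicator {c<..<c+1} w * \<bar>h w\<bar> \<partial>lborel)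
      = (\<integral>y. indicator {c<..<c+1} (y + c) * \<bar>h (y + c)\<bar> \<partial>lborel)"
    by (rule lborel_integral_shift[symmetric])
  also have "\<dots> = (\<integral>y. indicator {0<..<1} y * \<bar>h (c + y)\<bar> \<partial>lborel)"
    by (rule Bochner_Integration.integral_cong) (auto simp: indicator_def add.commute)
  finally show "(\<integral>y. indicator {0<..<1} y * \<bar>h (c + y)\<bar> \<partial>lborel) = (\<integral>w. indicator {c<..<c+1} w * \<bar>h w\<bar> \<partial>lborel)"
    by simp
  have "(\<integral>w. indicator {c-1<..<c} w * \<bar>h w\<bar> \<partial>lborel)
      = \<bar>-1\<bar> *\<^sub>R (\<integral>y. indicator {c-1<..<c} (c + (-1) * y) * \<bar>h (c + (-1) * y)\<bar> \<partial>lborel)"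
    by (rule lborel_integral_real_affine) simp
  also have "\<dots> = (\<integral>y. indicator {0<..<1} y * \<bar>h (c - y)\<bar> \<partial>lborel)"
    by (simp, rule Bochner_Integration.integral_cong) (auto simp: indicator_def)
  finally show "(\<integral>y. indicator {0<..<1} y * \<bar>h (c - y)\<bar> \<partial>lborel) = (\<integral>w. indicator {c-1<..<c} w * \<bar>h w\<bar> \<partial>lborel)"
    by simp
qed

lemma sum_indicator_odd_intervals_le_1:
  fixes I :: "int set"
  assumes "finite I"
  shows "(\<Sum>i\<in>I. indicator {2 * real_of_int i<..<2 * real_of_int i + 1} w
                + indicator {2 * real_of_int i - 1<..<2 * real_of_int i} w) \<le> (1::real)"
proof -
  define i0 where "i0 = \<lfloor>(w + 1) / 2\<rfloor>"
  have le: "indicator {2 * real_of_int i<..<2 * real_of_int i + 1} w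
          + indicator {2 * real_of_int i - 1<..<2 * real_of_int i} w
      \<le> (if i = i0 then 1 else (0::real))" for i
  proof (cases "w \<in> {2 * real_of_int i - 1<..<2 * real_of_int i + 1}")
    case True
    then have "i = i0" unfolding i0_def by (intro floor_unique[symmetric]) (auto simp: field_simps)
    then show ?thesis by (auto simp: indicator_def)
  qed (auto simp: indicator_def)
  have "(\<Sum>i\<in>I. indicator {2 * real_of_int i<..<2 * real_of_int i + 1} w
              + indicator {2 * real_of_int i - 1<..<2 * real_of_int i} w)
      \<le> (\<Sum>i\<in>I. if i = i0 then 1 else (0::real))"
    by (rule sum_mono) (rule le)
  also have "\<dots> \<le> 1" using assms by (simp add: sum.delta)
  finally show ?thesis .
qed

text \<open>Folding: the intervals \<open>2i + (0,1)\<close> and \<open>2i - (0,1)\<close> are pairwise disjoint.\<close>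

lemma folded_abs_sum_integral_le:
  fixes h :: "real \<Rightarrow> real" and I :: "int set"
  assumes hi: "integrable lborel h" and finI: "finite I"
  defines "S y \<equiv> (\<Sum>i\<in>I. \<bar>h (2 * of_int i + y)\<bar> + \<bar>h (2 * of_int i - y)\<bar>)"
  shows "integrable lborel (\<lambda>y. indicator {0<..<1} y * S y)"
    and "(\<integral>y. indicator {0<..<1} y * S y \<partial>lborel) \<le> (\<integral>z. \<bar>h z\<bar> \<partial>lborel)"
proof -
  have [measurable]: "h \<in> borel_measurable borel" using hi by auto
  let ?J = "\<lambda>i w. indicator {2 * real_of_int i<..<2 * real_of_int i + 1} w
                + indicator {2 * real_of_int i - 1<..<2 * real_of_int i} w :: real"
  have piece_int: "integrable lborel (\<lambda>w. indicator {a<..<b} w * \<bar>h w\<bar>)" for a b :: real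
    using integrable_mult_indicator[of "{a<..<b}" lborel "\<lambda>w. \<bar>h w\<bar>"] hi by simp
  have plus_int: "integrable lborel (\<lambda>y. indicator {0<..<1} y * \<bar>h (c + y)\<bar>)" for c
    using integrable_mult_indicator[of "{0<..<1}" lborel "\<lambda>y. \<bar>h (c + y)\<bar>"]
      lborel_integrable_shift[OF integrable_abs[OF hi], of c] by (simp add: add.commute)
  have minus_int: "integrable lborel (\<lambda>y. indicator {0<..<1} y * \<bar>h (c - y)\<bar>)" for c
    using lborel_integrable_real_affine[OF integrable_abs[OF hi], of "-1" c]
      integrable_mult_indicator[of "{0<..<1}" lborel "\<lambda>y. \<bar>h (c - y)\<bar>"] by simp
  show "integrable lborel (\<lambda>y. indicator {0<..<1} y * S y)"
    unfolding S_def sum_distrib_left distrib_left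
    by (intro Bochner_Integration.integrable_sum Bochner_Integration.integrable_add plus_int minus_int)
  have "(\<integral>y. indicator {0<..<1} y * S y \<partial>lborel)
      = (\<Sum>i\<in>I. (\<integral>y. indicator {0<..<1} y * \<bar>h (2 * of_int i + y)\<bar> \<partial>lborel)
                 + (\<integral>y. indicator {0<..<1} y * \<bar>h (2 * of_int i - y)\<bar> \<partial>lborel))"
    unfolding S_def sum_distrib_left distrib_left
    by (subst Bochner_Integration.integral_sum)
       (auto intro!: plus_int minus_int sum.cong Bochner_Integration.integral_add Bochner_Integration.integrable_add)
  also have "\<dots> = (\<Sum>i\<in>I. (\<integral>w. indicator {2 * real_of_int i<..<2 * real_of_int i + 1} w * \<bar>h w\<bar> \<partial>lborel)
                 + (\<integral>w. indicator {2 * real_of_int i - 1<..<2 * real_of_int i} w * \<bar>h w\<bar> \<partial>lborel))"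
    by (simp add: lborel_integral_flip_shift)
  also have "\<dots> = (\<integral>w. (\<Sum>i\<in>I. ?J i w) * \<bar>h w\<bar> \<partial>lborel)"
    unfolding sum_distrib_right distrib_right
    by (subst Bochner_Integration.integral_sum)
       (auto intro!: piece_int sum.cong Bochner_Integration.integral_add[symmetric] Bochner_Integration.integrable_add)
  also have "\<dots> \<le> (\<integral>w. \<bar>h w\<bar> \<partial>lborel)"
  proof (rule integral_mono)
    show "integrable lborel (\<lambda>w. (\<Sum>i\<in>I. ?J i w) * \<bar>h w\<bar>)"
      unfolding sum_distrib_right distrib_right
      by (intro Bochner_Integration.integrable_sum Bochner_Integration.integrable_add piece_int)
    show "(\<Sum>i\<in>I. ?J i w) * \<bar>h w\<bar> \<le> \<bar>h w\<bar>" for w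
      using sum_indicator_odd_intervals_le_1[OF finI, of w]
      by (simp add: mult_left_le_one_le sum_nonneg)
  qed (use hi in auto)
  finally show "(\<integral>y. indicator {0<..<1} y * S y \<partial>lborel) \<le> (\<integral>z. \<bar>h z\<bar> \<partial>lborel)" .
qed

lemma pi_push_L1:
  fixes h :: "real \<Rightarrow> real"
  assumes hi: "integrable lborel h" and supp: "\<And>z. \<bar>z\<bar> > R \<Longrightarrow> h z = 0"
  shows "integrable lebesgue_01 (pi_push h)" and "L1_norm (pi_push h) \<le> (\<integral>z. \<bar>h z\<bar> \<partial>lborel)"
proof -
  have [measurable]: "h \<in> borel_measurable borel" using hi by auto
  obtain N :: nat where N: "R + 1 \<le> 2 * real N" by (rule obtain_fold_bound)
  define I where "I = {-int N..int N}"
  define S where "S y = (\<Sum>i\<in>I. h (2 * of_int i + y) + h (2 * of_int i - y))" for y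
  define S' where "S' y = (\<Sum>i\<in>I. \<bar>h (2 * of_int i + y)\<bar> + \<bar>h (2 * of_int i - y)\<bar>)" for y
  have Sm[measurable]: "S \<in> borel_measurable borel" unfolding S_def by measurable
  have S'm[measurable]: "S' \<in> borel_measurable borel" unfolding S'_def by measurable
  note fold = folded_abs_sum_integral_le[OF hi, of I, folded S'_def]
  have eq: "\<And>y. 0 < y \<Longrightarrow> y < 1 \<Longrightarrow> pi_push h y = S y"
    unfolding S_def I_def by (rule pi_push_eq_sum[OF supp N])
  have ae: "AE y in lebesgue_01. pi_push h y = S y"
    using AE_lebesgue_01_interior by eventually_elim (use eq in auto)
  have pm: "pi_push h \<in> borel_measurable lebesgue_01"
    by (rule borel_measurable_lebesgue_01_cong_interior[OF Sm eq])
  have S'_int: "integrable lebesgue_01 S'"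
    using fold(1) lebesgue_01_integral_eq_lborel(2)[OF S'm] unfolding I_def by simp
  have S_le: "\<bar>S y\<bar> \<le> S' y" for y
    unfolding S_def S'_def by (rule order.trans[OF sum_abs]) (intro sum_mono abs_triangle_ineq)
  have S_int: "integrable lebesgue_01 S"
    by (rule Bochner_Integration.integrable_bound[OF S'_int borel_measurable_lebesgue_01[OF Sm]])
       (auto intro!: AE_I2 order.trans[OF S_le abs_ge_self])
  show "integrable lebesgue_01 (pi_push h)"
    by (rule integrable_cong_AE_imp[OF S_int pm]) (use ae in auto)
  have "L1_norm (pi_push h) = (\<integral>y. \<bar>S y\<bar> \<partial>lebesgue_01)"
    unfolding L1_norm_def
    by (rule integral_cong_AE) (use pm borel_measurable_lebesgue_01[OF Sm] ae in auto)
  also have "\<dots> \<le> (\<integral>y. S' y \<partial>lebesgue_01)"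
    by (rule integral_mono[OF integrable_abs[OF S_int] S'_int]) (rule S_le)
  also have "\<dots> = (\<integral>y. indicator {0<..<1} y * S' y \<partial>lborel)"
    by (rule lebesgue_01_integral_eq_lborel(1)[OF S'm])
  also have "\<dots> \<le> (\<integral>z. \<bar>h z\<bar> \<partial>lborel)"
    using fold(2) unfolding I_def by simp
  finally show "L1_norm (pi_push h) \<le> (\<integral>z. \<bar>h z\<bar> \<partial>lborel)" .
qed

section \<open>Transfer operators with a noise kernel\<close>

locale noisy =
  fixes \<xi> :: real and \<rho> :: "real \<Rightarrow> real"
  assumes noise_kernel: "noise_kernel \<xi> \<rho>"
begin

lemma
  shows bounded_variation_kernel: "bounded_variation \<rho>"
    and kernel_support: "\<bar>x\<bar> > \<xi> / 2 \<Longrightarrow> \<rho> x = 0"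
    and integrable_kernel: "integrable lborel \<rho>"
  using noise_kernel unfolding noise_kernel_def by auto

lemma borel_measurable_kernel[measurable]: "\<rho> \<in> borel_measurable borel"
  using integrable_kernel by auto

lemma integrable_kernel_shift: "integrable lborel (\<lambda>z. \<rho> (z - c))"
  using lborel_integrable_shift[OF integrable_kernel, of "-c"] by simp

lemma kernel_translates_L1_diff_le:
  "(\<integral>z. \<bar>\<rho> (z - s) - \<rho> (z - t)\<bar> \<partial>lborel) \<le> BV_norm \<rho> * \<bar>s - t\<bar>"
proof -
  have "(\<integral>z. \<bar>\<rho> (z - s) - \<rho> (z - t)\<bar> \<partial>lborel)
      = (\<integral>z. \<bar>\<rho> ((z + - t) + (t - s)) - \<rho> (z + - t)\<bar> \<partial>lborel)"
    by simp
  also have "\<dots> = (\<integral>w. \<bar>\<rho> (w + (t - s)) - \<rho> w\<bar> \<partial>lborel)"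
    by (rule lborel_integral_shift)
  also have "\<dots> \<le> \<bar>t - s\<bar> * BV_norm \<rho>"
    by (rule L1_shift_le_BV_norm[OF bounded_variation_kernel kernel_support integrable_kernel])
  finally show ?thesis by (simp add: abs_minus_commute mult.commute)
qed

lemma abs_kernel_le_BV_norm: "\<bar>\<rho> x\<bar> \<le> BV_norm \<rho>"
  by (rule abs_le_BV_norm_if_bounded_support[OF bounded_variation_kernel kernel_support])

definition kernel_mass :: real where
  "kernel_mass = (\<integral>z. \<bar>\<rho> z\<bar> \<partial>lborel)"

lemma kernel_mass_nonneg: "0 \<le> kernel_mass"
  unfolding kernel_mass_def by simp

lemma integrable_conv_push_integrand:
  assumes [measurable]: "T \<in> borel_measurable lebesgue_01" and gi: "integrable lebesgue_01 g"
  shows "integrable lebesgue_01 (\<lambda>x. \<rho> (z - T x) * g x)"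
proof (rule Bochner_Integration.integrable_bound[where f="\<lambda>x. BV_norm \<rho> * g x"])
  show "integrable lebesgue_01 (\<lambda>x. BV_norm \<rho> * g x)" using gi by simp
  have [measurable]: "g \<in> borel_measurable lebesgue_01" using gi by simp
  show "(\<lambda>x. \<rho> (z - T x) * g x) \<in> borel_measurable lebesgue_01" by measurable
  show "AE x in lebesgue_01. norm (\<rho> (z - T x) * g x) \<le> norm (BV_norm \<rho> * g x)"
    using abs_kernel_le_BV_norm BV_norm_nonneg[OF bounded_variation_kernel]
    by (auto simp: abs_mult intro!: mult_right_mono)
qed

lemma conv_push_eq_0:
  assumes T01: "T ` {0..1} \<subseteq> {0..1}" and z: "\<bar>z\<bar> > \<bar>\<xi>\<bar> + 1"
  shows "conv_push T \<rho> g z = 0"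
proof -
  have "\<rho> (z - T x) * g x = 0" if "x \<in> {0..1}" for x
  proof -
    have "T x \<in> {0..1}" using T01 that by (auto simp: image_subset_iff)
    then have "\<bar>z - T x\<bar> > \<xi> / 2" using z by (cases "z \<ge> 0") auto
    then show ?thesis using kernel_support by simp
  qed
  then have "conv_push T \<rho> g z = (\<integral>x. 0 \<partial>lebesgue_01)"
    unfolding conv_push_def by (intro Bochner_Integration.integral_cong) auto
  then show ?thesis by simp
qed

lemma conv_push_L1:
  assumes [measurable]: "T \<in> borel_measurable lebesgue_01" and gi: "integrable lebesgue_01 g"
  shows "integrable lborel (conv_push T \<rho> g)"
    and "(\<integral>z. \<bar>conv_push T \<rho> g z\<bar> \<partial>lborel) \<le> kernel_mass * L1_norm g"
proof -
  have km: "(\<lambda>(x, z). \<rho> (z - T x)) \<in> borel_measurable (lebesgue_01 \<Otimes>\<^sub>M lborel)"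
    by measurable
  have "(\<integral>z. \<bar>\<rho> (z - c)\<bar> \<partial>lborel) = kernel_mass" for c
    using lborel_integral_shift[of "\<lambda>z. \<bar>\<rho> z\<bar>" "-c"] unfolding kernel_mass_def by simp
  then have kb: "AE x in lebesgue_01. (\<integral>z. \<bar>\<rho> (z - T x)\<bar> \<partial>lborel) \<le> kernel_mass"
    by simp
  note integral_kernel_L1_bound[of "\<lambda>x z. \<rho> (z - T x)", OF km gi integrable_kernel_shift kb]
  then show "integrable lborel (conv_push T \<rho> g)"
    and "(\<integral>z. \<bar>conv_push T \<rho> g z\<bar> \<partial>lborel) \<le> kernel_mass * L1_norm g"
    unfolding conv_push_def by auto
qed

lemma transfer_op_L1:
  assumes Tm: "T \<in> borel_measurable lebesgue_01" and T01: "T ` {0..1} \<subseteq> {0..1}"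
    and gi: "integrable lebesgue_01 g"
  shows "integrable lebesgue_01 (transfer_op T \<rho> g)"
    and "L1_norm (transfer_op T \<rho> g) \<le> kernel_mass * L1_norm g"
  using pi_push_L1[where R="\<bar>\<xi>\<bar> + 1", OF conv_push_L1(1)[OF Tm gi] conv_push_eq_0[OF T01]] conv_push_L1(2)[OF Tm gi]
  unfolding transfer_op_def by auto

lemma conv_push_linear:
  assumes Tm: "T \<in> borel_measurable lebesgue_01"
    and g1: "integrable lebesgue_01 g1" and g2: "integrable lebesgue_01 g2"
  shows "conv_push T \<rho> (\<lambda>x. a * g1 x + b * g2 x) = (\<lambda>z. a * conv_push T \<rho> g1 z + b * conv_push T \<rho> g2 z)"
proof
  fix z
  have "conv_push T \<rho> (\<lambda>x. a * g1 x + b * g2 x) z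
      = (\<integral>x. a * (\<rho> (z - T x) * g1 x) + b * (\<rho> (z - T x) * g2 x) \<partial>lebesgue_01)"
    unfolding conv_push_def by (simp add: algebra_simps)
  then show "conv_push T \<rho> (\<lambda>x. a * g1 x + b * g2 x) z = a * conv_push T \<rho> g1 z + b * conv_push T \<rho> g2 z"
    unfolding conv_push_def
    using integrable_conv_push_integrand[OF Tm g1, of z] integrable_conv_push_integrand[OF Tm g2, of z]
    by simp
qed

lemma transfer_op_linear:
  assumes Tm: "T \<in> borel_measurable lebesgue_01" and T01: "T ` {0..1} \<subseteq> {0..1}"
    and g1: "integrable lebesgue_01 g1" and g2: "integrable lebesgue_01 g2"
  shows "AE y in lebesgue_01. transfer_op T \<rho> (\<lambda>x. a * g1 x + b * g2 x) y
           = a * transfer_op T \<rho> g1 y + b * transfer_op T \<rho> g2 y"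
  using pi_push_linear[where R="\<bar>\<xi>\<bar> + 1", OF conv_push_eq_0[OF T01] conv_push_eq_0[OF T01]]
  unfolding transfer_op_def conv_push_linear[OF Tm g1 g2] .

lemma transfer_op_cong_AE:
  assumes Tm: "T \<in> borel_measurable lebesgue_01"
    and g1: "integrable lebesgue_01 g1" and g2: "integrable lebesgue_01 g2"
    and ae: "AE x in lebesgue_01. g1 x = g2 x"
  shows "transfer_op T \<rho> g1 = transfer_op T \<rho> g2"
proof -
  have "conv_push T \<rho> g1 z = conv_push T \<rho> g2 z" for z
    unfolding conv_push_def
    by (rule integral_cong_AE)
       (use integrable_conv_push_integrand[OF Tm g1, of z] integrable_conv_push_integrand[OF Tm g2, of z] ae
        in auto)
  then show ?thesis unfolding transfer_op_def by presburger
qed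

text \<open>\<open>L\<^bsub>T\<^sub>1,\<rho>\<^esub> - L\<^bsub>T\<^sub>2,\<rho>\<^esub>\<close> is \<open>\<pi>\<^sub>*\<close> applied to the integral operator with kernel
  \<open>\<rho>(z - T\<^sub>1 x) - \<rho>(z - T\<^sub>2 x)\<close>, a difference of two translates of \<open>\<rho>\<close>.\<close>

lemma transfer_op_perturbation:
  assumes T1m[measurable]: "T1 \<in> borel_measurable lebesgue_01" and T101: "T1 ` {0..1} \<subseteq> {0..1}"
    and T2m[measurable]: "T2 \<in> borel_measurable lebesgue_01" and T201: "T2 ` {0..1} \<subseteq> {0..1}"
    and gi: "integrable lebesgue_01 g"
    and close: "AE x in lebesgue_01. \<bar>T1 x - T2 x\<bar> \<le> \<delta>"
  shows "integrable lebesgue_01 (\<lambda>y. transfer_op T1 \<rho> g y - transfer_op T2 \<rho> g y)"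
    and "L1_norm (\<lambda>y. transfer_op T1 \<rho> g y - transfer_op T2 \<rho> g y) \<le> BV_norm \<rho> * \<delta> * L1_norm g"
proof -
  define h where "h z = 1 * conv_push T1 \<rho> g z + (-1) * conv_push T2 \<rho> g z" for z
  have h_supp: "\<And>z. \<bar>z\<bar> > \<bar>\<xi>\<bar> + 1 \<Longrightarrow> h z = 0"
    unfolding h_def using conv_push_eq_0[OF T101] conv_push_eq_0[OF T201] by simp
  have h_kernel: "h z = (\<integral>x. (\<rho> (z - T1 x) - \<rho> (z - T2 x)) * g x \<partial>lebesgue_01)" for z
    unfolding h_def conv_push_def
    using integrable_conv_push_integrand[OF T1m gi, of z] integrable_conv_push_integrand[OF T2m gi, of z]
    by (simp add: left_diff_distrib)
  have hi: "integrable lborel h" unfolding h_def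
    using conv_push_L1(1)[OF T1m gi] conv_push_L1(1)[OF T2m gi] by simp
  have ae: "AE y in lebesgue_01. pi_push h y = transfer_op T1 \<rho> g y - transfer_op T2 \<rho> g y"
    using pi_push_linear[where R="\<bar>\<xi>\<bar> + 1" and a=1 and b="-1",
        OF conv_push_eq_0[OF T101] conv_push_eq_0[OF T201]]
    unfolding transfer_op_def h_def by simp
  note pi_h = pi_push_L1[where R="\<bar>\<xi>\<bar> + 1", OF hi h_supp]
  have diff_m: "(\<lambda>y. transfer_op T1 \<rho> g y - transfer_op T2 \<rho> g y) \<in> borel_measurable lebesgue_01"
    using transfer_op_L1(1)[OF T1m T101 gi] transfer_op_L1(1)[OF T2m T201 gi] by measurable
  show "integrable lebesgue_01 (\<lambda>y. transfer_op T1 \<rho> g y - transfer_op T2 \<rho> g y)"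
    by (rule integrable_cong_AE_imp[OF pi_h(1) diff_m ae])
  have fibre_bound: "AE x in lebesgue_01. (\<integral>z. \<bar>\<rho> (z - T1 x) - \<rho> (z - T2 x)\<bar> \<partial>lborel) \<le> BV_norm \<rho> * \<delta>"
    using close
    by eventually_elim
       (rule order.trans[OF kernel_translates_L1_diff_le mult_left_mono],
        auto intro: BV_norm_nonneg[OF bounded_variation_kernel])
  have "L1_norm (\<lambda>y. transfer_op T1 \<rho> g y - transfer_op T2 \<rho> g y) = L1_norm (pi_push h)"
    unfolding L1_norm_def by (rule integral_cong_AE) (use diff_m pi_h(1) ae in auto)
  also have "\<dots> \<le> (\<integral>z. \<bar>h z\<bar> \<partial>lborel)" by (rule pi_h(2))
  also have "\<dots> \<le> BV_norm \<rho> * \<delta> * L1_norm g"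
    using integral_kernel_L1_bound(2)[of "\<lambda>x z. \<rho> (z - T1 x) - \<rho> (z - T2 x)", OF _ gi _ fibre_bound]
      integrable_kernel_shift
    unfolding h_kernel by simp
  finally show "L1_norm (\<lambda>y. transfer_op T1 \<rho> g y - transfer_op T2 \<rho> g y) \<le> BV_norm \<rho> * \<delta> * L1_norm g" .
qed

end

section \<open>Measurability of piecewise monotone maps\<close>

lemma borel_measurable_mono_on_lebesgue:
  fixes T :: "real \<Rightarrow> real"
  assumes "mono_on P T"
  shows "T \<in> borel_measurable (restrict_space lebesgue P)"
proof (rule borel_measurable_subalgebra[OF _ _ borel_measurable_mono_on_fnc[OF assms]])
  show "sets (restrict_space borel P) \<subseteq> sets (restrict_space lebesgue P)"
    by (rule mono_restrict_space) auto
  show "space (restrict_space borel P) = space (restrict_space lebesgue P)"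
    by (simp add: space_restrict_space)
qed

lemma borel_measurable_antimono_on_lebesgue:
  fixes T :: "real \<Rightarrow> real"
  assumes "monotone_on P (\<le>) (\<ge>) T"
  shows "T \<in> borel_measurable (restrict_space lebesgue P)"
proof -
  have "mono_on P (\<lambda>x. - T x)" using assms by (auto simp: monotone_on_def)
  then have "(\<lambda>x. - T x) \<in> borel_measurable (restrict_space lebesgue P)"
    by (rule borel_measurable_mono_on_lebesgue)
  then have "(\<lambda>x. - (- T x)) \<in> borel_measurable (restrict_space lebesgue P)"
    by measurable
  then show ?thesis by simp
qed

lemma piecewise_smooth_borel_measurable:
  fixes T :: "real \<Rightarrow> real"
  assumes "piecewise_smooth T"
  shows "T \<in> borel_measurable lebesgue_01"
proof -
  obtain \<P> :: "real set set" where fin: "finite \<P>" and un: "\<Union>\<P> = {0..1}"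
    and pieces: "\<And>P. P \<in> \<P> \<Longrightarrow> is_interval P \<and> (mono_on P T \<or> monotone_on P (\<le>) (\<ge>) T)"
    using assms unfolding piecewise_smooth_def by metis
  have P_lebesgue: "P \<in> sets lebesgue" if "P \<in> \<P>" for P
  proof -
    have "P \<subseteq> {0..1}" using un that by auto
    then have "bounded P" by (meson bounded_closed_interval bounded_subset)
    moreover have "convex P" using pieces[OF that] by (simp add: is_interval_convex)
    ultimately show ?thesis using measurable_convex by (auto simp: fmeasurable_def)
  qed
  show ?thesis
  proof (rule measurable_piecewise_restrict[of \<P>])
    show "countable \<P>" using fin by (rule countable_finite)
    show "space lebesgue_01 \<subseteq> \<Union>\<P>" using un by simp
    fix P assume P: "P \<in> \<P>"
    have sub: "P \<subseteq> {0..1}" using un P by auto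
    show "P \<inter> space lebesgue_01 \<in> sets lebesgue_01"
      using P_lebesgue[OF P] sub by (simp add: sets_restrict_space_iff Int_absorb2)
    have "restrict_space lebesgue_01 P = restrict_space lebesgue P"
      using restrict_restrict_space[of "{0..1}" lebesgue P] P_lebesgue[OF P] sub
      by (simp add: Int_absorb1)
    moreover have "T \<in> borel_measurable (restrict_space lebesgue P)"
      using pieces[OF P] borel_measurable_mono_on_lebesgue borel_measurable_antimono_on_lebesgue
      by blast
    ultimately show "T \<in> borel_measurable (restrict_space lebesgue_01 P)" by simp
  qed
qed

section \<open>Iterates of a transfer operator\<close>

locale noisy_map = noisy +
  fixes T :: "real \<Rightarrow> real"
  assumes borel_measurable_map: "T \<in> borel_measurable lebesgue_01"
    and map_into_unit: "T ` {0..1} \<subseteq> {0..1}"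
begin

abbreviation L :: "(real \<Rightarrow> real) \<Rightarrow> real \<Rightarrow> real" where
  "L \<equiv> transfer_op T \<rho>"

lemma integrable_iterate: "integrable lebesgue_01 u \<Longrightarrow> integrable lebesgue_01 ((L ^^ n) u)"
  by (induction n) (auto intro: transfer_op_L1(1)[OF borel_measurable_map map_into_unit])

lemma iterate_L1_le:
  assumes "integrable lebesgue_01 u"
  shows "L1_norm ((L ^^ n) u) \<le> kernel_mass ^ n * L1_norm u"
proof (induction n)
  case 0 then show ?case by simp
next
  case (Suc n)
  have "L1_norm ((L ^^ Suc n) u) \<le> kernel_mass * L1_norm ((L ^^ n) u)"
    using transfer_op_L1(2)[OF borel_measurable_map map_into_unit integrable_iterate[OF assms]] by simp
  also have "\<dots> \<le> kernel_mass * (kernel_mass ^ n * L1_norm u)"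
    using Suc kernel_mass_nonneg by (intro mult_left_mono) auto
  finally show ?case by simp
qed

lemma iterate_cong_AE:
  assumes u: "integrable lebesgue_01 u" and v: "integrable lebesgue_01 v"
    and "AE x in lebesgue_01. u x = v x"
  shows "AE x in lebesgue_01. (L ^^ n) u x = (L ^^ n) v x"
proof (induction n)
  case 0 then show ?case using assms by simp
next
  case (Suc n)
  have "L ((L ^^ n) u) = L ((L ^^ n) v)"
    by (rule transfer_op_cong_AE[OF borel_measurable_map integrable_iterate[OF u] integrable_iterate[OF v] Suc])
  then show ?case by simp
qed

lemma iterate_add:
  assumes u: "integrable lebesgue_01 u" and v: "integrable lebesgue_01 v"
  shows "AE x in lebesgue_01. (L ^^ n) (\<lambda>x. u x + v x) x = (L ^^ n) u x + (L ^^ n) v x"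
proof (induction n)
  case 0 then show ?case by simp
next
  case (Suc n)
  have uv: "integrable lebesgue_01 (\<lambda>x. u x + v x)" using u v by simp
  have "L ((L ^^ n) (\<lambda>x. u x + v x)) = L (\<lambda>x. 1 * (L ^^ n) u x + 1 * (L ^^ n) v x)"
    by (rule transfer_op_cong_AE[OF borel_measurable_map integrable_iterate[OF uv]])
       (use integrable_iterate[OF u, of n] integrable_iterate[OF v, of n] Suc in auto)
  moreover have "AE y in lebesgue_01. L (\<lambda>x. 1 * (L ^^ n) u x + 1 * (L ^^ n) v x) y
      = 1 * L ((L ^^ n) u) y + 1 * L ((L ^^ n) v) y"
    by (rule transfer_op_linear[OF borel_measurable_map map_into_unit integrable_iterate[OF u] integrable_iterate[OF v]])
  ultimately show ?case by simp
qed

lemma defect_iterate: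
  assumes g: "integrable lebesgue_01 g" and e: "integrable lebesgue_01 e"
    and eq: "AE y in lebesgue_01. g y = L g y + e y"
  shows "AE y in lebesgue_01. g y = (L ^^ n) g y + (\<Sum>k<n. (L ^^ k) e y)"
proof (induction n)
  case 0 then show ?case by simp
next
  case (Suc n)
  have Lg: "integrable lebesgue_01 (L g)"
    by (rule transfer_op_L1(1)[OF borel_measurable_map map_into_unit g])
  have cong: "AE y in lebesgue_01. (L ^^ n) g y = (L ^^ n) (\<lambda>x. L g x + e x) y"
    by (rule iterate_cong_AE[OF g _ eq]) (use Lg e in simp)
  have add: "AE y in lebesgue_01. (L ^^ n) (\<lambda>x. L g x + e x) y = (L ^^ n) (L g) y + (L ^^ n) e y"
    by (rule iterate_add[OF Lg e])
  have shift: "(L ^^ n) (L g) = (L ^^ Suc n) g"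
    by (simp add: funpow_Suc_right del: funpow.simps)
  show ?case using Suc cong add
    by eventually_elim (simp add: shift del: funpow.simps)
qed

text \<open>With \<open>\<parallel>L\<^sup>i \<nu>\<parallel> \<le> c \<parallel>\<nu>\<parallel>\<close> on mean-zero \<open>\<nu>\<close>, a mean-zero solution of \<open>D = L D + e\<close> satisfies
  \<open>\<parallel>D\<parallel> \<le> c \<parallel>D\<parallel> + \<Sum>\<^sub>k\<^sub><\<^sub>i \<parallel>L\<^sup>k e\<parallel>\<close>, whence the constant \<open>(\<Sum>\<^sub>k\<^sub><\<^sub>i kernel_mass\<^sup>k) / (1 - c)\<close>.\<close>

lemma contracting_defect_bound:
  assumes "contracting_on_V L i"
  obtains C :: real where "0 \<le> C"
    and "\<And>D e. integrable lebesgue_01 D \<Longrightarrow> integral\<^sup>L lebesgue_01 D = 0 \<Longrightarrow> integrable lebesgue_01 e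
          \<Longrightarrow> AE y in lebesgue_01. D y = L D y + e y \<Longrightarrow> L1_norm D \<le> C * L1_norm e"
proof -
  obtain c where c1: "c < 1"
    and contr: "\<And>\<nu>. integrable lebesgue_01 \<nu> \<Longrightarrow> integral\<^sup>L lebesgue_01 \<nu> = 0
        \<Longrightarrow> L1_norm ((L ^^ i) \<nu>) \<le> c * L1_norm \<nu>"
    using assms unfolding contracting_on_V_def by blast
  define S where "S = (\<Sum>k<i. kernel_mass ^ k)"
  have "0 \<le> S" unfolding S_def using kernel_mass_nonneg by (intro sum_nonneg) simp
  then have C0: "0 \<le> S / (1 - c)" using c1 by simp
  have "L1_norm D \<le> S / (1 - c) * L1_norm e"
    if Di: "integrable lebesgue_01 D" and D0: "integral\<^sup>L lebesgue_01 D = 0"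
      and ei: "integrable lebesgue_01 e" and eq: "AE y in lebesgue_01. D y = L D y + e y" for D e
  proof -
    have sum_eq: "AE y in lebesgue_01. D y = (L ^^ i) D y + (\<Sum>k<i. (L ^^ k) e y)"
      by (rule defect_iterate[OF Di ei eq])
    have "L1_norm D = L1_norm (\<lambda>y. (L ^^ i) D y + (\<Sum>k<i. (L ^^ k) e y))"
      unfolding L1_norm_def
      by (rule integral_cong_AE) (use sum_eq Di integrable_iterate[OF Di] integrable_iterate[OF ei] in auto)
    also have "\<dots> \<le> L1_norm ((L ^^ i) D) + L1_norm (\<lambda>y. \<Sum>k<i. (L ^^ k) e y)"
      by (rule L1_norm_add_le) (use integrable_iterate[OF Di] integrable_iterate[OF ei] in auto)
    also have "L1_norm (\<lambda>y. \<Sum>k<i. (L ^^ k) e y) \<le> (\<Sum>k<i. L1_norm ((L ^^ k) e))"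
      by (rule L1_norm_sum_le) (use integrable_iterate[OF ei] in auto)
    also have "\<dots> \<le> (\<Sum>k<i. kernel_mass ^ k * L1_norm e)"
      by (intro sum_mono iterate_L1_le ei)
    also have "\<dots> = S * L1_norm e" unfolding S_def by (simp add: sum_distrib_right)
    finally have "L1_norm D \<le> c * L1_norm D + S * L1_norm e"
      using contr[OF Di D0] by linarith
    then show ?thesis using c1 by (simp add: field_simps)
  qed
  with C0 show ?thesis by (rule that)
qed

end

lemma (in noisy) stationary_difference_defect:
  assumes T1m: "T1 \<in> borel_measurable lebesgue_01" and T101: "T1 ` {0..1} \<subseteq> {0..1}"
    and f1: "stationary_density T1 \<rho> f1" and f2: "stationary_density T2 \<rho> f2"
  shows "AE y in lebesgue_01. f1 y - f2 y
           = transfer_op T1 \<rho> (\<lambda>x. f1 x - f2 x) y + (transfer_op T1 \<rho> f2 y - transfer_op T2 \<rho> f2 y)"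
proof -
  have f1i: "integrable lebesgue_01 f1" and f2i: "integrable lebesgue_01 f2"
    and fix1: "AE y in lebesgue_01. transfer_op T1 \<rho> f1 y = f1 y"
    and fix2: "AE y in lebesgue_01. transfer_op T2 \<rho> f2 y = f2 y"
    using f1 f2 unfolding stationary_density_def by auto
  have "AE y in lebesgue_01. transfer_op T1 \<rho> (\<lambda>x. 1 * (f1 x - f2 x) + 1 * f2 x) y
      = 1 * transfer_op T1 \<rho> (\<lambda>x. f1 x - f2 x) y + 1 * transfer_op T1 \<rho> f2 y"
    using f1i f2i by (intro transfer_op_linear[OF T1m T101]) auto
  with fix1 fix2 show ?thesis by eventually_elim auto
qed

lemma stationary_density_L1_norm:
  assumes "stationary_density T \<rho> f"
  shows "L1_norm f = 1"
proof -
  have "L1_norm f = integral\<^sup>L lebesgue_01 f"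
    unfolding L1_norm_def by (rule integral_cong_AE) (use assms in \<open>auto simp: stationary_density_def\<close>)
  then show ?thesis using assms unfolding stationary_density_def by simp
qed

lemma Linf_dist_finite:
  assumes "Linf_dist T1 T2 < \<infinity>"
  obtains \<delta> where "Linf_dist T1 T2 = ereal \<delta>" "0 \<le> \<delta>" "AE x in lebesgue_01. \<bar>T1 x - T2 x\<bar> \<le> \<delta>"
proof -
  have ae: "AE x in lebesgue_01. ereal \<bar>T1 x - T2 x\<bar> \<le> Linf_dist T1 T2"
    unfolding Linf_dist_def by (rule esssup_AE)
  then have "AE x in lebesgue_01. 0 \<le> Linf_dist T1 T2"
    by eventually_elim (auto intro: order.trans[rotated])
  moreover have "emeasure lebesgue_01 (space lebesgue_01) \<noteq> 0"
    by (simp add: emeasure_restrict_space space_restrict_space)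
  ultimately have "0 \<le> Linf_dist T1 T2"
    by (simp add: eventually_const_iff ae_filter_eq_bot_iff)
  then obtain \<delta> where "Linf_dist T1 T2 = ereal \<delta>" using assms by (cases "Linf_dist T1 T2") auto
  then show ?thesis using that ae \<open>0 \<le> Linf_dist T1 T2\<close> by auto
qed

lemma (in noisy_map) stationary_density_stability:
  assumes "contracting_on_V L i"
  obtains C :: real where "C > 0"
    and "\<And>T2 f1 f2 \<delta>. T2 \<in> borel_measurable lebesgue_01 \<Longrightarrow> T2 ` {0..1} \<subseteq> {0..1}
          \<Longrightarrow> AE x in lebesgue_01. \<bar>T x - T2 x\<bar> \<le> \<delta> \<Longrightarrow> 0 \<le> \<delta>
          \<Longrightarrow> stationary_density T \<rho> f1 \<Longrightarrow> stationary_density T2 \<rho> f2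
          \<Longrightarrow> L1_norm (\<lambda>x. f1 x - f2 x) \<le> C * \<delta> * BV_norm \<rho>"
proof -
  obtain C where C0: "0 \<le> C" and defect:
    "\<And>D e. integrable lebesgue_01 D \<Longrightarrow> integral\<^sup>L lebesgue_01 D = 0 \<Longrightarrow> integrable lebesgue_01 e
       \<Longrightarrow> AE y in lebesgue_01. D y = L D y + e y \<Longrightarrow> L1_norm D \<le> C * L1_norm e"
    using contracting_defect_bound[OF assms] by blast
  have "L1_norm (\<lambda>x. f1 x - f2 x) \<le> (C + 1) * \<delta> * BV_norm \<rho>"
    if T2: "T2 \<in> borel_measurable lebesgue_01" "T2 ` {0..1} \<subseteq> {0..1}"
      and close: "AE x in lebesgue_01. \<bar>T x - T2 x\<bar> \<le> \<delta>" and "0 \<le> \<delta>"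
      and f1: "stationary_density T \<rho> f1" and f2: "stationary_density T2 \<rho> f2" for T2 f1 f2 \<delta>
  proof -
    have f12: "integrable lebesgue_01 f1" "integrable lebesgue_01 f2"
      "integral\<^sup>L lebesgue_01 f1 = 1" "integral\<^sup>L lebesgue_01 f2 = 1"
      using f1 f2 unfolding stationary_density_def by auto
    note perturbation = transfer_op_perturbation[OF borel_measurable_map map_into_unit T2 f12(2) close]
    have "L1_norm (\<lambda>x. f1 x - f2 x) \<le> C * L1_norm (\<lambda>y. L f2 y - transfer_op T2 \<rho> f2 y)"
      by (rule defect[OF _ _ perturbation(1)
            stationary_difference_defect[OF borel_measurable_map map_into_unit f1 f2]])
         (use f12 in auto)
    also have "\<dots> \<le> C * (BV_norm \<rho> * \<delta> * 1)"
      using perturbation(2) stationary_density_L1_norm[OF f2] C0 by (simp add: mult_left_mono)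
    also have "\<dots> \<le> (C + 1) * \<delta> * BV_norm \<rho>"
      using \<open>0 \<le> \<delta>\<close> BV_norm_nonneg[OF bounded_variation_kernel] by (simp add: algebra_simps)
    finally show ?thesis .
  qed
  moreover have "C + 1 > 0" using C0 by simp
  ultimately show ?thesis using that by blast
qed

theorem theorem36:
  fixes T1 :: "real \<Rightarrow> real" and \<rho>1 :: "real \<Rightarrow> real" and \<xi> :: real
  assumes "T1 ` {0..1} \<subseteq> {0..1}"
    and "piecewise_smooth T1"
    and "noise_kernel \<xi> \<rho>1"
    and "\<exists>i. contracting_on_V (transfer_op T1 \<rho>1) i"
  shows "\<exists>C>0. \<forall>T2 f1 f2.
           T2 ` {0..1} \<subseteq> {0..1}
         \<and> T2 \<in> borel_measurable (lebesgue_on {0..1})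
         \<and> Linf_dist T1 T2 < \<infinity>
         \<and> stationary_density T1 \<rho>1 f1
         \<and> stationary_density T2 \<rho>1 f2
         \<longrightarrow> ereal (L1_norm (\<lambda>x. f1 x - f2 x)) \<le> ereal C * Linf_dist T1 T2 * ereal (BV_norm \<rho>1)"
proof -
  interpret noisy_map \<xi> \<rho>1 T1
    using assms(1-3) piecewise_smooth_borel_measurable by unfold_locales auto
  obtain i where "contracting_on_V (transfer_op T1 \<rho>1) i" using assms(4) by blast
  then obtain C where "C > 0" and stable:
    "\<And>T2 f1 f2 \<delta>. T2 \<in> borel_measurable lebesgue_01 \<Longrightarrow> T2 ` {0..1} \<subseteq> {0..1}
       \<Longrightarrow> AE x in lebesgue_01. \<bar>T1 x - T2 x\<bar> \<le> \<delta> \<Longrightarrow> 0 \<le> \<delta>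
       \<Longrightarrow> stationary_density T1 \<rho>1 f1 \<Longrightarrow> stationary_density T2 \<rho>1 f2
       \<Longrightarrow> L1_norm (\<lambda>x. f1 x - f2 x) \<le> C * \<delta> * BV_norm \<rho>1"
    by (elim stationary_density_stability) blast
  show ?thesis
  proof (intro exI[of _ C] conjI allI impI \<open>C > 0\<close>, elim conjE)
    fix T2 f1 f2
    assume T2: "T2 ` {0..1} \<subseteq> {0..1}" "T2 \<in> borel_measurable lebesgue_01"
      and finite: "Linf_dist T1 T2 < \<infinity>"
      and f1: "stationary_density T1 \<rho>1 f1" and f2: "stationary_density T2 \<rho>1 f2"
    obtain \<delta> where "Linf_dist T1 T2 = ereal \<delta>" "0 \<le> \<delta>" "AE x in lebesgue_01. \<bar>T1 x - T2 x\<bar> \<le> \<delta>"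
      using Linf_dist_finite[OF finite] by blast
    with stable[OF T2(2,1) _ _ f1 f2]
    show "ereal (L1_norm (\<lambda>x. f1 x - f2 x)) \<le> ereal C * Linf_dist T1 T2 * ereal (BV_norm \<rho>1)"
      by simp
  qed
qed

end
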